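(* Let $h,k:(0,\infty)\to(0,1]$ be increasing continuous functions with $h(t)\to 0$ and $k(t)\to0$ as $t\to0$, and let $\rho,\sigma>0$. Let $U\subseteq\mathbb{R}^n$ and $V\subseteq\mathbb{R}^m$ be bounded open sets. Suppose that $f:U\to\mathbb{R}$ has an $(h,\rho)$-almost analytic extension and that $g:V\to U$ (with $g(V)\subseteq U$) has a $(k,\sigma)$-almost analytic extension $G$. Then $f\circ g$ admits a $(\max\{h,k\},\max\{C\rho,\sigma\})$-almost analytic extension, where $C$ is the Lipschitz constant of the extension $G$ of $g$.
   Context: For a bounded open $U\subseteq\mathbb{R}^n$, an increasing continuous $h:(0,\infty)\to(0,1]$ tending to $0$ at $0$, and $\rho>0$, a function $f:U\to\mathbb{R}$ admits an $(h,\rho)$-almost analytic extension if there are $F\in C^1_c(\mathbb{C}^n)$ and a constant $C\ge1$ with $F|_U=f$ and $|\overline\partial F(z)|\le C\,h(\rho\, d(z,\overline U))$ for all $z\in\mathbb{C}^n$, where $d(z,\overline U)=\inf_{x\in\overline U}|x-z|$ and $\overline\partial F=(\partial F/\partial\overline z_1,\dots,\partial F/\partial\overline z_n)$. A vector-valued map $g=(g_1,\dots,g_n):V\to\mathbb{R}^n$ admits an $(h,\rho)$-almost analytic extension if each component does; its extension is $G=(G_1,\dots,G_n)\in C^1_c(\mathbb{C}^m,\mathbb{C}^n)$. The function $\max\{h,k\}$ is the pointwise maximum. *)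

theory Defs
  imports "HOL-Analysis.Analysis"
begin

definition cvec :: "real ^ 'n \<Rightarrow> complex ^ 'n" where
  "cvec x = (\<chi> i. complex_of_real (x $ i))"

definition C1c :: "(complex ^ 'n \<Rightarrow> complex) \<Rightarrow> bool" where
  "C1c F \<longleftrightarrow>
     (\<exists>F'. (\<forall>z. (F has_derivative blinfun_apply (F' z)) (at z)) \<and> continuous_on UNIV F') \<and>
     compact (closure {z. F z \<noteq> 0})"

text \<open>Wirtinger derivative dF/d(conj z_j) = (dF/dx_j + i dF/dy_j)/2.\<close>
definition dbar_comp :: "(complex ^ 'n \<Rightarrow> complex) \<Rightarrow> complex ^ 'n \<Rightarrow> 'n \<Rightarrow> complex" where
  "dbar_comp F z j =
     (frechet_derivative F (at z) (axis j 1) + \<i> * frechet_derivative F (at z) (axis j \<i>)) / 2"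

definition dbar :: "(complex ^ 'n \<Rightarrow> complex) \<Rightarrow> complex ^ 'n \<Rightarrow> complex ^ 'n" where
  "dbar F z = (\<chi> j. dbar_comp F z j)"

text \<open>(h,rho)-almost analytic extension F of f on U. The bound is required at points
  with positive distance to the closure of U (h is only defined on (0,infinity)).\<close>
definition almost_analytic_ext ::
  "(real \<Rightarrow> real) \<Rightarrow> real \<Rightarrow> (real ^ 'n) set \<Rightarrow> (real ^ 'n \<Rightarrow> real) \<Rightarrow> (complex ^ 'n \<Rightarrow> complex) \<Rightarrow> bool" where
  "almost_analytic_ext h \<rho> U f F \<longleftrightarrow>
     C1c F \<and> (\<forall>x\<in>U. F (cvec x) = complex_of_real (f x)) \<and>
     (\<exists>C\<ge>1. \<forall>z. infdist z (cvec ` closure U) > 0 \<longrightarrow>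
        norm (dbar F z) \<le> C * h (\<rho> * infdist z (cvec ` closure U)))"

definition has_almost_analytic_ext ::
  "(real \<Rightarrow> real) \<Rightarrow> real \<Rightarrow> (real ^ 'n) set \<Rightarrow> (real ^ 'n \<Rightarrow> real) \<Rightarrow> bool" where
  "has_almost_analytic_ext h \<rho> U f \<longleftrightarrow> (\<exists>F. almost_analytic_ext h \<rho> U f F)"

definition almost_analytic_ext_vec ::
  "(real \<Rightarrow> real) \<Rightarrow> real \<Rightarrow> (real ^ 'm) set \<Rightarrow> (real ^ 'm \<Rightarrow> real ^ 'n) \<Rightarrow> (complex ^ 'm \<Rightarrow> complex ^ 'n) \<Rightarrow> bool" where
  "almost_analytic_ext_vec k \<sigma> V g G \<longleftrightarrow>
     (\<forall>j. almost_analytic_ext k \<sigma> V (\<lambda>x. g x $ j) (\<lambda>z. G z $ j))"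

definition admissible_weight :: "(real \<Rightarrow> real) \<Rightarrow> bool" where
  "admissible_weight h \<longleftrightarrow>
     (\<forall>t>0. 0 < h t \<and> h t \<le> 1) \<and> mono_on {0<..} h \<and> continuous_on {0<..} h \<and>
     (h \<longlongrightarrow> 0) (at_right 0)"

end

theory Submission
  imports Defs
begin

(* If F and G are almost analytic extensions of f and g, then F \<circ> G extends f \<circ> g, and the chain
   rule for Wirtinger derivatives bounds dbar (F \<circ> G) at z by |G'| |dbar F (G z)| + |F'(G z)| |dbar G z|.
   Since G is L-Lipschitz and maps the real points over closure V into those over closure U, the
   distance from G z to the latter is at most L times the distance d from z to the former; hence
   the first term is O(h (L \<rho> d)) and the second O(k (\<sigma> d)). When G z is itself such a real point
   the bound on dbar F is vacuous, but dbar F vanishes there: real points are limits of non-real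
   ones, at which the bound tends to 0. Finally a C^1 cutoff equal to 1 near closure V restores
   compact support without changing dbar near closure V; far from it dbar is bounded and the weight
   is bounded below. *)

section \<open>Continuously differentiable maps\<close>

definition continuously_differentiable :: "('a::real_normed_vector \<Rightarrow> 'b::real_normed_vector) \<Rightarrow> bool" where
  "continuously_differentiable F \<longleftrightarrow>
     (\<exists>F'. (\<forall>z. (F has_derivative blinfun_apply (F' z)) (at z)) \<and> continuous_on UNIV F')"

lemma continuously_differentiableI:
  fixes F :: "'a::euclidean_space \<Rightarrow> 'b::real_normed_vector"
  assumes "\<And>z. (F has_derivative D z) (at z)" and "\<And>b. b \<in> Basis \<Longrightarrow> continuous_on UNIV (\<lambda>z. D z b)"
  shows "continuously_differentiable F"
proof -
  have "blinfun_apply (Blinfun (D z)) = D z" for z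
    using assms(1)[of z] by (intro bounded_linear_Blinfun_apply has_derivative_bounded_linear)
  then show ?thesis
    unfolding continuously_differentiable_def using assms
    by (intro exI[of _ "\<lambda>z. Blinfun (D z)"] conjI allI continuous_on_blinfun_componentwise) auto
qed

lemma continuously_differentiable_imp_differentiable:
  "continuously_differentiable F \<Longrightarrow> F differentiable at z"
  unfolding continuously_differentiable_def differentiable_def by blast

lemma continuously_differentiable_imp_continuous_on:
  "continuously_differentiable F \<Longrightarrow> continuous_on UNIV F"
  by (meson continuously_differentiable_imp_differentiable differentiable_imp_continuous_within
      continuous_at_imp_continuous_on)

lemma continuously_differentiable_compose:
  assumes "continuously_differentiable F" and "continuously_differentiable G"
  shows "continuously_differentiable (F \<circ> G)"
proof -
  obtain F' G' where F': "\<And>w. (F has_derivative blinfun_apply (F' w)) (at w)" "continuous_on UNIV F'"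
    and G': "\<And>z. (G has_derivative blinfun_apply (G' z)) (at z)" "continuous_on UNIV G'"
    using assms unfolding continuously_differentiable_def by blast
  have "continuous_on UNIV G"
    using assms(2) by (rule continuously_differentiable_imp_continuous_on)
  then have "continuous_on UNIV (\<lambda>z. F' (G z) o\<^sub>L G' z)"
    by (intro continuous_intros G'(2) continuous_on_compose2[OF F'(2)]) auto
  moreover have "(F \<circ> G has_derivative blinfun_apply (F' (G z) o\<^sub>L G' z)) (at z)" for z
    using diff_chain_at[OF G'(1) F'(1)] by (simp add: o_def blinfun_compose.rep_eq)
  ultimately show ?thesis
    unfolding continuously_differentiable_def by (intro exI[of _ "\<lambda>z. F' (G z) o\<^sub>L G' z"]) blast
qed

lemma continuously_differentiable_scaleR:
  fixes a :: "'a::euclidean_space \<Rightarrow> real" and F :: "'a \<Rightarrow> 'b::real_normed_vector"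
  assumes "continuously_differentiable a" and "continuously_differentiable F"
  shows "continuously_differentiable (\<lambda>z. a z *\<^sub>R F z)"
proof -
  obtain a' F' where a': "\<And>z. (a has_derivative blinfun_apply (a' z)) (at z)" "continuous_on UNIV a'"
    and F': "\<And>z. (F has_derivative blinfun_apply (F' z)) (at z)" "continuous_on UNIV F'"
    using assms unfolding continuously_differentiable_def by blast
  have "continuous_on UNIV a" "continuous_on UNIV F"
    using assms by (auto intro: continuously_differentiable_imp_continuous_on)
  then show ?thesis
    by (intro continuously_differentiableI[where D="\<lambda>z v. a z *\<^sub>R F' z v + a' z v *\<^sub>R F z"]
        has_derivative_scaleR[OF a'(1) F'(1), THEN has_derivative_eq_rhs] continuous_intros a'(2) F'(2))
      auto
qed

lemma continuously_differentiable_componentwise: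
  fixes G :: "'a::euclidean_space \<Rightarrow> 'b::euclidean_space ^ 'n"
  assumes "\<And>j. continuously_differentiable (\<lambda>z. G z $ j)"
  shows "continuously_differentiable G"
proof -
  obtain D where D: "\<And>j z. ((\<lambda>z. G z $ j) has_derivative blinfun_apply (D j z)) (at z)"
    and cD: "\<And>j. continuous_on UNIV (D j)"
    using assms unfolding continuously_differentiable_def by metis
  have "(G has_derivative (\<lambda>v. \<chi> j. D j z v)) (at z)" for z
  proof (subst has_derivative_componentwise_within, intro ballI)
    fix b :: "'b ^ 'n" assume "b \<in> Basis"
    then obtain i u where "b = axis i u" "u \<in> Basis"
      by (auto simp: Basis_vec_def)
    then show "((\<lambda>x. G x \<bullet> b) has_derivative (\<lambda>v. (\<chi> j. D j z v) \<bullet> b)) (at z)"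
      using bounded_linear.has_derivative[OF bounded_linear_inner_left[of u] D[of i z]]
      by (simp add: inner_axis)
  qed
  then show ?thesis
    by (rule continuously_differentiableI) (intro continuous_on_vec_lambda continuous_intros cD)
qed

lemma has_real_derivative_imp_continuously_differentiable:
  fixes \<phi> \<phi>' :: "real \<Rightarrow> real"
  assumes "\<And>t. (\<phi> has_real_derivative \<phi>' t) (at t)" and "continuous_on UNIV \<phi>'"
  shows "continuously_differentiable \<phi>"
  using assms unfolding has_field_derivative_def
  by (intro continuously_differentiableI[where D="\<lambda>t v. \<phi>' t * v"]) (auto intro!: continuous_intros)

lemma continuously_differentiable_inner_self:
  "continuously_differentiable (\<lambda>z::'a::euclidean_space. z \<bullet> z)"
  by (intro continuously_differentiableI[OF has_derivative_inner[OF has_derivative_ident has_derivative_ident]]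
      continuous_intros)

lemma compact_support_bounded_derivative:
  fixes F :: "'a::real_normed_vector \<Rightarrow> 'b::real_normed_vector"
  assumes F': "\<And>z. (F has_derivative blinfun_apply (F' z)) (at z)" "continuous_on UNIV F'"
    and supp: "compact (closure {z. F z \<noteq> 0})"
  shows "bounded (range F')"
proof -
  let ?K = "closure {z. F z \<noteq> 0}"
  have "F' z = 0" if "z \<notin> ?K" for z
  proof -
    have "((\<lambda>_. 0) has_derivative (\<lambda>_. 0)) (at z)"
      by simp
    then have "(F has_derivative (\<lambda>_. 0)) (at z)"
      by (rule has_derivative_transform_within_open[where s="- ?K"])
        (use that in \<open>auto intro: closure_subset[THEN subsetD] ccontr\<close>)
    then show ?thesis
      using has_derivative_unique[OF F'(1)] by (simp add: blinfun_eqI)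
  qed
  then have "range F' \<subseteq> insert 0 (F' ` ?K)"
    by auto
  moreover have "compact (F' ` ?K)"
    by (intro compact_continuous_image continuous_on_subset[OF F'(2)] supp) auto
  ultimately show ?thesis
    by (meson bounded_insert bounded_subset compact_imp_bounded)
qed

lemma has_derivative_norm_le_lipschitz:
  fixes f :: "'a::real_normed_vector \<Rightarrow> 'b::real_normed_vector"
  assumes f: "(f has_derivative f') (at z)" and "L-lipschitz_on UNIV f"
  shows "norm (f' v) \<le> L * norm v"
proof (cases "v = 0")
  case True
  then show ?thesis
    using f by (simp add: has_derivative_bounded_linear linear_simps)
next
  case False
  have lin: "linear f'"
    using f by (simp add: has_derivative_linear)
  show ?thesis
  proof (rule field_le_epsilon)
    fix e :: real assume "e > 0"
    then obtain d where "d > 0"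
      and d: "\<And>y. norm (y - z) < d \<Longrightarrow> norm (f y - f z - f' (y - z)) \<le> e / norm v * norm (y - z)"
      using f False unfolding has_derivative_at_alt by (meson divide_pos_pos zero_less_norm_iff)
    define t where "t = d / (2 * norm v)"
    have "t > 0" and "norm (t *\<^sub>R v) < d"
      using \<open>d > 0\<close> False by (simp_all add: t_def)
    have "t * norm (f' v) = norm (f' (t *\<^sub>R v))"
      using \<open>t > 0\<close> by (simp add: linear_cmul[OF lin])
    also have "\<dots> \<le> norm (f (z + t *\<^sub>R v) - f z) + norm (f (z + t *\<^sub>R v) - f z - f' (t *\<^sub>R v))"
      using norm_triangle_ineq4[of "f (z + t *\<^sub>R v) - f z" "f (z + t *\<^sub>R v) - f z - f' (t *\<^sub>R v)"]
      by simp
    also have "\<dots> \<le> L * norm (t *\<^sub>R v) + e / norm v * norm (t *\<^sub>R v)"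
      using lipschitz_on_normD[OF \<open>L-lipschitz_on UNIV f\<close>, of "z + t *\<^sub>R v" z]
        d[of "z + t *\<^sub>R v"] \<open>norm (t *\<^sub>R v) < d\<close>
      by (intro add_mono) auto
    also have "\<dots> = t * (L * norm v + e)"
      using \<open>t > 0\<close> False by (simp add: field_simps)
    finally show "norm (f' v) \<le> L * norm v + e"
      using \<open>t > 0\<close> by simp
  qed
qed

section \<open>A \<open>C\<^sup>1\<close> cutoff function\<close>

lemma has_real_derivative_max0_square:
  "((\<lambda>t. (max 0 t)\<^sup>2) has_real_derivative 2 * max 0 x) (at x)"
proof -
  consider "x > 0" | "x < 0" | "x = 0" by linarith
  then show ?thesis
  proof cases
    case 1
    have "((\<lambda>t. t\<^sup>2) has_real_derivative 2 * max 0 x) (at x)"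
      using 1 by (auto intro!: derivative_eq_intros)
    then show ?thesis
      by (rule has_field_derivative_transform_within_open[where S="{0<..}"]) (use 1 in auto)
  next
    case 2
    have "((\<lambda>t. 0) has_real_derivative 2 * max 0 x) (at x)"
      using 2 by simp
    then show ?thesis
      by (rule has_field_derivative_transform_within_open[where S="{..<0}"]) (use 2 in auto)
  next
    case 3
    have "((\<lambda>y. max 0 y) \<longlongrightarrow> max 0 0) (at (0::real))"
      by (intro tendsto_intros)
    moreover have "\<forall>\<^sub>F y in at (0::real). max 0 y = ((max 0 y)\<^sup>2 - (max 0 0)\<^sup>2) / (y - 0)"
      unfolding eventually_at_filter by (intro always_eventually) (simp add: max_def power2_eq_square)
    ultimately show ?thesis
      using 3 by (simp add: has_field_derivative_iff tendsto_cong)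
  qed
qed

lemmas has_real_derivative_max0_square_chain[derivative_intros] =
  DERIV_chain2[OF has_real_derivative_max0_square]

text \<open>A \<open>C\<^sup>1\<close> step from \<open>0\<close> to \<open>1\<close> on \<open>[0, 1]\<close>, glued from the quadratic pieces
  \<open>2t\<^sup>2\<close> and \<open>1 - 2(1 - t)\<^sup>2\<close>.\<close>
definition smooth_step :: "real \<Rightarrow> real" where
  "smooth_step t = 2 * ((max 0 t)\<^sup>2 - 2 * (max 0 (t - 1/2))\<^sup>2 + (max 0 (t - 1))\<^sup>2)"

definition smooth_step' :: "real \<Rightarrow> real" where
  "smooth_step' t = 4 * (max 0 t - 2 * max 0 (t - 1/2) + max 0 (t - 1))"

lemma has_real_derivative_smooth_step[derivative_intros]:
  assumes "(g has_real_derivative g') (at x)"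
  shows "((\<lambda>x. smooth_step (g x)) has_real_derivative smooth_step' (g x) * g') (at x)"
  unfolding smooth_step_def[abs_def] smooth_step'_def
  by (rule derivative_eq_intros assms refl | simp add: algebra_simps)+

lemma continuous_on_smooth_step': "continuous_on UNIV smooth_step'"
  unfolding smooth_step'_def by (intro continuous_intros)

lemma smooth_step_eq_0: "t \<le> 0 \<Longrightarrow> smooth_step t = 0"
  by (simp add: smooth_step_def)

lemma smooth_step_eq_1: "t \<ge> 1 \<Longrightarrow> smooth_step t = 1"
  by (simp add: smooth_step_def power2_eq_square algebra_simps)

lemma exists_continuously_differentiable_cutoff:
  "\<exists>\<psi> :: 'a::euclidean_space \<Rightarrow> real. continuously_differentiable \<psi> \<and>
     (\<forall>z\<in>cball 0 r. \<psi> z = 1) \<and> bounded {z. \<psi> z \<noteq> 0}"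
proof -
  define \<psi> :: "'a \<Rightarrow> real" where "\<psi> = (\<lambda>t. 1 - smooth_step (t - r\<^sup>2)) \<circ> (\<lambda>z. z \<bullet> z)"
  have "continuously_differentiable \<psi>"
    unfolding \<psi>_def
    by (intro continuously_differentiable_compose continuously_differentiable_inner_self
        has_real_derivative_imp_continuously_differentiable[where \<phi>'="\<lambda>t. - smooth_step' (t - r\<^sup>2)"] continuous_intros
        continuous_on_compose2[OF continuous_on_smooth_step'] derivative_eq_intros) auto
  moreover have "\<psi> z = 1" if "z \<in> cball 0 r" for z
  proof -
    have "z \<bullet> z \<le> r\<^sup>2"
      using that power_mono[of "norm z" r 2] by (simp add: power2_norm_eq_inner)
    then show ?thesis by (simp add: \<psi>_def smooth_step_eq_0)
  qed
  moreover have "{z. \<psi> z \<noteq> 0} \<subseteq> cball 0 (sqrt (r\<^sup>2 + 1))"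
  proof
    fix z assume "z \<in> {z. \<psi> z \<noteq> 0}"
    then have "z \<bullet> z \<le> r\<^sup>2 + 1"
      using smooth_step_eq_1[of "z \<bullet> z - r\<^sup>2"] by (force simp: \<psi>_def)
    then show "z \<in> cball 0 (sqrt (r\<^sup>2 + 1))"
      by (simp add: norm_eq_sqrt_inner)
  qed
  ultimately show ?thesis
    by (intro exI[of _ \<psi>]) (auto intro: bounded_subset)
qed

section \<open>Distance-weighted bounds\<close>

lemma infdist_image_le_lipschitz:
  assumes "L-lipschitz_on UNIV G" and "G ` S \<subseteq> T" and "S \<noteq> {}"
  shows "infdist (G z) T \<le> L * infdist z S"
proof -
  have bound: "infdist (G z) T \<le> L * dist z y" if "y \<in> S" for y
  proof -
    have "infdist (G z) T \<le> dist (G z) (G y)"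
      using that assms(2) by (auto intro: infdist_le)
    also have "\<dots> \<le> L * dist z y"
      using assms(1) by (rule lipschitz_onD) auto
    finally show ?thesis .
  qed
  show ?thesis
  proof (cases "L = 0")
    case True
    then show ?thesis
      using bound \<open>S \<noteq> {}\<close> by auto
  next
    case False
    then have "L > 0"
      using lipschitz_on_nonneg[OF assms(1)] by simp
    have "infdist (G z) T / L \<le> infdist z S"
      unfolding infdist_notempty[OF \<open>S \<noteq> {}\<close>]
      using bound \<open>L > 0\<close> \<open>S \<noteq> {}\<close> by (intro cINF_greatest) (auto simp: divide_le_eq mult.commute)
    then show ?thesis
      using \<open>L > 0\<close> by (simp add: divide_le_eq mult.commute)
  qed
qed

lemma weighted_distance_bound_imp_eq_0:
  fixes \<Phi> :: "'a::real_normed_vector \<Rightarrow> 'b::real_normed_vector"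
  assumes h: "(h \<longlongrightarrow> 0) (at_right 0)" and "\<rho> > 0" and "isCont \<Phi> w"
    and S: "closed S" "w \<in> S" "w islimpt - S"
    and bound: "\<And>z. infdist z S > 0 \<Longrightarrow> norm (\<Phi> z) \<le> C * h (\<rho> * infdist z S)"
  shows "\<Phi> w = 0"
proof -
  let ?F = "at w within - S"
  have "?F \<noteq> bot"
    using S(3) trivial_limit_within by blast
  have off_S: "\<forall>\<^sub>F z in ?F. infdist z S > 0"
    using S(1,2) in_closed_iff_infdist_zero[of S] infdist_nonneg
    by (auto simp: eventually_at_filter less_le intro!: always_eventually)
  have "((\<lambda>z. \<rho> * infdist z S) \<longlongrightarrow> \<rho> * infdist w S) ?F"
    by (intro tendsto_intros)
  then have "filterlim (\<lambda>z. \<rho> * infdist z S) (at_right 0) ?F"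
    using S(2) off_S \<open>\<rho> > 0\<close>
    by (intro tendsto_imp_filterlim_at_right) (auto elim!: eventually_mono)
  then have "((\<lambda>z. C * h (\<rho> * infdist z S)) \<longlongrightarrow> C * 0) ?F"
    by (intro tendsto_intros filterlim_compose[OF h])
  moreover have "((\<lambda>z. norm (\<Phi> z)) \<longlongrightarrow> norm (\<Phi> w)) ?F"
    using continuous_at_imp_continuous_at_within[OF \<open>isCont \<Phi> w\<close>]
    by (intro tendsto_norm) (simp add: continuous_within)
  moreover have "\<forall>\<^sub>F z in ?F. norm (\<Phi> z) \<le> C * h (\<rho> * infdist z S)"
    using off_S by (auto elim!: eventually_mono intro: bound)
  ultimately have "norm (\<Phi> w) \<le> C * 0"
    using \<open>?F \<noteq> bot\<close> by (intro tendsto_le[of ?F]) auto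
  then show ?thesis
    by simp
qed

lemma weighted_bound_if_bounded_and_near_bound:
  fixes \<Phi> :: "'a \<Rightarrow> 'b::real_normed_vector" and d :: "'a \<Rightarrow> real" and K :: "real \<Rightarrow> real"
  assumes K: "mono_on {0<..} K" "\<And>t. t > 0 \<Longrightarrow> K t > 0" and "\<rho> > 0"
    and "bounded (range \<Phi>)"
    and near: "\<And>z. 0 < d z \<Longrightarrow> d z < 1 \<Longrightarrow> norm (\<Phi> z) \<le> C * K (\<rho> * d z)"
  obtains C' where "C' \<ge> 1" and "\<And>z. 0 < d z \<Longrightarrow> norm (\<Phi> z) \<le> C' * K (\<rho> * d z)"
proof -
  obtain M where M: "\<And>z. norm (\<Phi> z) \<le> M"
    using \<open>bounded (range \<Phi>)\<close> by (meson bounded_iff rangeI)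
  define C' where "C' = max 1 (max C (M / K \<rho>))"
  have "norm (\<Phi> z) \<le> C' * K (\<rho> * d z)" if "d z > 0" for z
  proof (cases "d z < 1")
    case True
    have "K (\<rho> * d z) > 0"
      by (intro K(2)) (use \<open>\<rho> > 0\<close> that in simp)
    then have "C * K (\<rho> * d z) \<le> C' * K (\<rho> * d z)"
      by (intro mult_right_mono) (auto simp: C'_def)
    then show ?thesis
      using near[OF that True] by linarith
  next
    case False
    have "K \<rho> \<le> K (\<rho> * d z)"
      using \<open>\<rho> > 0\<close> False by (intro mono_onD[OF K(1)]) auto
    have "norm (\<Phi> z) \<le> M / K \<rho> * K \<rho>"
      using M[of z] K(2)[OF \<open>\<rho> > 0\<close>] by simp
    also have "\<dots> \<le> C' * K (\<rho> * d z)"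
      using \<open>K \<rho> \<le> K (\<rho> * d z)\<close> K(2)[OF \<open>\<rho> > 0\<close>]
      by (intro mult_mono) (auto simp: C'_def)
    finally show ?thesis .
  qed
  then show ?thesis
    using that[of C'] by (simp add: C'_def)
qed

lemma norm_axis: "norm (axis i c :: 'a::real_normed_vector ^ 'n) = norm c"
proof -
  have "(\<Sum>j\<in>UNIV. (norm (axis i c $ j))\<^sup>2) = (\<Sum>j\<in>UNIV. if j = i then (norm c)\<^sup>2 else 0)"
    by (rule sum.cong) (auto simp: axis_def)
  then show ?thesis
    by (simp add: norm_vec_def L2_set_def)
qed

lemma norm_vec_le_sum_norm: "norm (x :: 'a::real_normed_vector ^ 'n) \<le> (\<Sum>j\<in>UNIV. norm (x $ j))"
  by (simp add: norm_vec_def L2_set_le_sum)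

lemma norm_sum_cnj_mult_le: "norm (\<Sum>j\<in>UNIV. cnj (x $ j) * y $ j) \<le> norm x * norm (y :: complex ^ 'n)"
proof -
  have "norm (\<Sum>j\<in>UNIV. cnj (x $ j) * y $ j) \<le> (\<Sum>j\<in>UNIV. \<bar>norm (x $ j)\<bar> * \<bar>norm (y $ j)\<bar>)"
    by (rule order_trans[OF norm_sum]) (simp add: norm_mult)
  also have "\<dots> \<le> norm x * norm y"
    unfolding norm_vec_def by (rule L2_set_mult_ineq)
  finally show ?thesis .
qed

lemma cvec_nth [simp]: "cvec x $ j = complex_of_real (x $ j)"
  by (simp add: cvec_def)

lemma continuous_on_cvec: "continuous_on S cvec"
  unfolding cvec_def by (intro continuous_intros)

lemma compact_cvec_image: "bounded U \<Longrightarrow> compact (cvec ` closure U)"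
  by (intro compact_continuous_image continuous_on_cvec) (simp add: compact_closure)

lemma cvec_islimpt_compl_range_cvec: "cvec x islimpt - range cvec"
proof (unfold islimpt_approachable, intro allI impI)
  fix e :: real assume "e > 0"
  fix j :: 'a
  define y where "y = cvec x + axis j (\<i> * of_real (e / 2))"
  have "Im (y $ j) \<noteq> 0"
    using \<open>e > 0\<close> by (simp add: y_def axis_def)
  then have "y \<notin> range cvec"
    by auto
  moreover have "dist y (cvec x) < e"
    using \<open>e > 0\<close> by (simp add: y_def dist_norm norm_axis norm_mult)
  ultimately show "\<exists>y\<in>- range cvec. y \<noteq> cvec x \<and> dist y (cvec x) < e"
    by (metis ComplI rangeI)
qed

lemma real_linear_wirtinger_sum:
  fixes B :: "complex ^ 'n \<Rightarrow> complex"
  assumes "linear B"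
  shows "B P + \<i> * B (\<i> *s P) = (\<Sum>j\<in>UNIV. cnj (P $ j) * (B (axis j 1) + \<i> * B (axis j \<i>)))"
proof -
  have B_axis: "B (axis j c) = Re c *\<^sub>R B (axis j 1) + Im c *\<^sub>R B (axis j \<i>)" for j c
  proof -
    have "axis j c = Re c *\<^sub>R axis j 1 + Im c *\<^sub>R (axis j \<i> :: complex ^ 'n)"
      by (simp add: vec_eq_iff axis_def complex_eq_iff)
    then show ?thesis
      by (simp add: linear_add[OF assms] linear_scale[OF assms])
  qed
  have B_sum: "B x = (\<Sum>j\<in>UNIV. B (axis j (x $ j)))" for x
  proof -
    have "x = (\<Sum>j\<in>UNIV. axis j (x $ j))"
      using basis_expansion[of x] by (simp add: vec_eq_iff axis_def)
    then have "B x = B (\<Sum>j\<in>UNIV. axis j (x $ j))"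
      by (rule arg_cong)
    also have "\<dots> = (\<Sum>j\<in>UNIV. B (axis j (x $ j)))"
      by (rule linear_sum[OF assms])
    finally show ?thesis .
  qed
  have pointwise: "B (axis j p) + \<i> * B (axis j (\<i> * p)) = cnj p * (B (axis j 1) + \<i> * B (axis j \<i>))"
    for j p
  proof -
    have c: "cnj p = of_real (Re p) - \<i> * of_real (Im p)"
      by (simp add: complex_eq_iff)
    have b1: "B (axis j p) = of_real (Re p) * B (axis j 1) + of_real (Im p) * B (axis j \<i>)"
      by (simp add: B_axis[of j p] scaleR_conv_of_real)
    have b2: "B (axis j (\<i> * p)) = - of_real (Im p) * B (axis j 1) + of_real (Re p) * B (axis j \<i>)"
      by (simp add: B_axis[of j "\<i> * p"] scaleR_conv_of_real)
    show ?thesis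
      unfolding b1 b2 c by (simp add: algebra_simps)
  qed
  have "B P + \<i> * B (\<i> *s P) = (\<Sum>j\<in>UNIV. B (axis j (P $ j)) + \<i> * B (axis j (\<i> * P $ j)))"
    using B_sum[of P] B_sum[of "\<i> *s P"] by (simp add: sum.distrib sum_distrib_left)
  then show ?thesis
    by (simp add: pointwise)
qed

section \<open>The Wirtinger derivative\<close>

lemma C1c_iff:
  "C1c F \<longleftrightarrow> continuously_differentiable F \<and> compact (closure {z. F z \<noteq> 0})"
  by (simp add: C1c_def continuously_differentiable_def)

lemma C1c_bounded_derivative:
  assumes "C1c F"
  obtains F' B where "\<And>z. (F has_derivative blinfun_apply (F' z)) (at z)" and "\<And>z. norm (F' z) \<le> B"
  using assms compact_support_bounded_derivative unfolding C1c_def by (metis bounded_iff rangeI)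

lemma dbar_eq:
  assumes "(F has_derivative D) (at w)"
  shows "dbar F w = (\<chi> j. (D (axis j 1) + \<i> * D (axis j \<i>)) / 2)"
  by (simp add: dbar_def dbar_comp_def frechet_derivative_at[OF assms, symmetric])

lemma dbar_transform_within_open:
  assumes "F differentiable at w" and "open X" and "w \<in> X" and "\<And>z. z \<in> X \<Longrightarrow> F z = H z"
  shows "dbar F w = dbar H w"
  using frechet_derivative_transform_within_open[OF assms] by (simp add: dbar_def dbar_comp_def)

lemma continuous_on_dbar:
  assumes "continuously_differentiable F"
  shows "continuous_on UNIV (dbar F)"
proof -
  obtain F' where F': "\<And>z. (F has_derivative blinfun_apply (F' z)) (at z)" "continuous_on UNIV F'"
    using assms unfolding continuously_differentiable_def by blast
  have "dbar F = (\<lambda>w. \<chi> j. (F' w (axis j 1) + \<i> * F' w (axis j \<i>)) / 2)"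
    by (intro ext) (simp add: dbar_eq[OF F'(1)])
  moreover have "continuous_on UNIV (\<lambda>w. \<chi> j. (F' w (axis j 1) + \<i> * F' w (axis j \<i>)) / 2)"
    by (intro continuous_on_vec_lambda continuous_intros F'(2)) auto
  ultimately show ?thesis
    by simp
qed

lemma norm_dbar_le:
  fixes F :: "complex ^ 'n \<Rightarrow> complex"
  assumes "(F has_derivative blinfun_apply D) (at w)"
  shows "norm (dbar F w) \<le> CARD('n) * norm D"
proof -
  have "norm (dbar F w $ j) \<le> norm D" for j
  proof -
    have "norm (D (axis j 1) + \<i> * D (axis j \<i>)) \<le> norm (D (axis j 1)) + norm (D (axis j \<i>))"
      using norm_triangle_ineq by (metis mult_1 norm_ii norm_mult)
    also have "\<dots> \<le> norm D + norm D"
      using norm_blinfun[of D "axis j 1"] norm_blinfun[of D "axis j \<i>"] by (simp add: norm_axis)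
    finally show ?thesis
      by (simp add: dbar_eq[OF assms] norm_divide)
  qed
  then have "(\<Sum>j\<in>UNIV. norm (dbar F w $ j)) \<le> CARD('n) * norm D"
    using sum_mono[of UNIV "\<lambda>j. norm (dbar F w $ j)" "\<lambda>_. norm D"] by simp
  then show ?thesis
    using norm_vec_le_sum_norm[of "dbar F w"] by linarith
qed

lemma C1c_bounded_dbar:
  fixes H :: "complex ^ 'n \<Rightarrow> complex"
  assumes "C1c H"
  shows "bounded (range (dbar H))"
proof -
  obtain DH B where DH: "\<And>z. (H has_derivative blinfun_apply (DH z)) (at z)" and "\<And>z. norm (DH z) \<le> B"
    using C1c_bounded_derivative[OF assms] by blast
  then have "norm (dbar H z) \<le> CARD('n) * B" for z
    using norm_dbar_le[OF DH, of z] by (meson mult_left_mono of_nat_0_le_iff order_trans)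
  then show ?thesis
    by (auto simp: bounded_iff)
qed

lemma C1c_cutoff_eq_on_ball:
  fixes E :: "complex ^ 'n \<Rightarrow> complex"
  assumes E: "continuously_differentiable E"
  obtains H where "C1c H" and "\<And>z. z \<in> ball 0 r \<Longrightarrow> H z = E z"
    and "\<And>z. z \<in> ball 0 r \<Longrightarrow> dbar H z = dbar E z"
proof -
  obtain \<psi> :: "complex ^ 'n \<Rightarrow> real" where \<psi>: "continuously_differentiable \<psi>"
    and \<psi>_1: "\<And>z. z \<in> cball 0 r \<Longrightarrow> \<psi> z = 1" and "bounded {z. \<psi> z \<noteq> 0}"
    using exists_continuously_differentiable_cutoff by blast
  define H where "H z = \<psi> z *\<^sub>R E z" for z
  have H: "continuously_differentiable H"
    unfolding H_def using \<psi> E by (rule continuously_differentiable_scaleR)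
  have "{z. H z \<noteq> 0} \<subseteq> {z. \<psi> z \<noteq> 0}"
    by (auto simp: H_def)
  then have "C1c H"
    using H \<open>bounded {z. \<psi> z \<noteq> 0}\<close> by (simp add: C1c_iff compact_closure bounded_subset)
  moreover have H_eq: "H z = E z" if "z \<in> ball 0 r" for z
    using that by (simp add: H_def \<psi>_1)
  moreover have "dbar H z = dbar E z" if "z \<in> ball 0 r" for z
    using continuously_differentiable_imp_differentiable[OF H] that H_eq
    by (intro dbar_transform_within_open[of _ _ "ball 0 r"]) auto
  ultimately show ?thesis
    using that by blast
qed

lemma dbar_compose_nth:
  fixes F :: "complex ^ 'n \<Rightarrow> complex" and G :: "complex ^ 'm \<Rightarrow> complex ^ 'n"
  assumes G: "(G has_derivative G') (at z)" and F: "(F has_derivative blinfun_apply B) (at (G z))"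
  shows "dbar (F \<circ> G) z $ i = (\<Sum>j\<in>UNIV. cnj (G' (axis i 1) $ j) * dbar F (G z) $ j)
    + \<i> / 2 * B (G' (axis i \<i>) - \<i> *s G' (axis i 1))"
proof -
  let ?P = "G' (axis i 1)" and ?W = "G' (axis i \<i>) - \<i> *s G' (axis i 1)"
  have "dbar (F \<circ> G) z $ i = (B ?P + \<i> * B (\<i> *s ?P + ?W)) / 2"
    using dbar_eq[OF diff_chain_at[OF G F]] by simp
  also have "\<dots> = (B ?P + \<i> * B (\<i> *s ?P)) / 2 + \<i> / 2 * B ?W"
    unfolding blinfun.add_right by (simp add: algebra_simps)
  also have "(B ?P + \<i> * B (\<i> *s ?P)) / 2 = (\<Sum>j\<in>UNIV. cnj (?P $ j) * dbar F (G z) $ j)"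
    using real_linear_wirtinger_sum[OF bounded_linear.linear[OF blinfun.bounded_linear_right], of B ?P]
    by (simp add: dbar_eq[OF F] sum_divide_distrib)
  finally show ?thesis .
qed

lemma complex_linearity_defect_eq_dbar:
  fixes G :: "complex ^ 'm \<Rightarrow> complex ^ 'n"
  assumes "(G has_derivative G') (at z)"
  shows "(G' (axis i \<i>) - \<i> *s G' (axis i 1)) $ j = - 2 * \<i> * dbar (\<lambda>z. G z $ j) z $ i"
  using dbar_eq[OF bounded_linear.has_derivative[OF bounded_linear_vec_nth assms, of j]]
  by (simp add: algebra_simps)

lemma norm_dbar_compose_nth_le:
  fixes F :: "complex ^ 'n \<Rightarrow> complex" and G :: "complex ^ 'm \<Rightarrow> complex ^ 'n"
  assumes G: "(G has_derivative G') (at z)" and F: "(F has_derivative blinfun_apply B) (at (G z))"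
    and G'_le: "\<And>v. norm (G' v) \<le> L * norm v"
  shows "norm (dbar (F \<circ> G) z $ i) \<le>
    L * norm (dbar F (G z)) + norm B * (\<Sum>j\<in>UNIV. norm (dbar (\<lambda>z. G z $ j) z))"
proof -
  define P where "P = G' (axis i 1)"
  define W where "W = G' (axis i \<i>) - \<i> *s P"
  have "norm W \<le> (\<Sum>j\<in>UNIV. 2 * norm (dbar (\<lambda>z. G z $ j) z $ i))"
    using norm_vec_le_sum_norm[of W] complex_linearity_defect_eq_dbar[OF G]
    by (simp add: W_def P_def norm_mult)
  also have "\<dots> \<le> 2 * (\<Sum>j\<in>UNIV. norm (dbar (\<lambda>z. G z $ j) z))"
    unfolding sum_distrib_left[symmetric]
    by (intro mult_left_mono sum_mono Finite_Cartesian_Product.norm_nth_le) simp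
  finally have W_le: "norm W / 2 \<le> (\<Sum>j\<in>UNIV. norm (dbar (\<lambda>z. G z $ j) z))"
    by simp
  have "norm (dbar (F \<circ> G) z $ i) \<le>
      norm (\<Sum>j\<in>UNIV. cnj (P $ j) * dbar F (G z) $ j) + norm (\<i> / 2 * B W)"
    unfolding dbar_compose_nth[OF G F] P_def W_def by (rule norm_triangle_ineq)
  also have "\<dots> \<le> norm P * norm (dbar F (G z)) + norm B * (norm W / 2)"
    using norm_sum_cnj_mult_le[of P "dbar F (G z)"] norm_blinfun[of B W]
    by (simp add: norm_mult norm_divide)
  also have "\<dots> \<le> L * norm (dbar F (G z)) + norm B * (\<Sum>j\<in>UNIV. norm (dbar (\<lambda>z. G z $ j) z))"
    using G'_le[of "axis i 1"] W_le
    by (intro add_mono mult_right_mono mult_left_mono) (simp_all add: P_def norm_axis)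
  finally show ?thesis .
qed

lemma norm_dbar_compose_le:
  fixes F :: "complex ^ 'n \<Rightarrow> complex" and G :: "complex ^ 'm \<Rightarrow> complex ^ 'n"
  assumes "(G has_derivative G') (at z)" and "(F has_derivative blinfun_apply B) (at (G z))"
    and "\<And>v. norm (G' v) \<le> L * norm v"
  shows "norm (dbar (F \<circ> G) z) \<le>
    CARD('m) * (L * norm (dbar F (G z)) + norm B * (\<Sum>j\<in>UNIV. norm (dbar (\<lambda>z. G z $ j) z)))"
proof -
  have "norm (dbar (F \<circ> G) z) \<le> (\<Sum>i\<in>UNIV. norm (dbar (F \<circ> G) z $ i))"
    by (rule norm_vec_le_sum_norm)
  also have "\<dots> \<le> (\<Sum>i\<in>(UNIV :: 'm set).
      L * norm (dbar F (G z)) + norm B * (\<Sum>j\<in>UNIV. norm (dbar (\<lambda>z. G z $ j) z)))"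
    by (intro sum_mono) (rule norm_dbar_compose_nth_le[OF assms])
  finally show ?thesis
    by simp
qed

section \<open>Almost analytic extensions\<close>

lemma admissible_weight_max:
  assumes "admissible_weight h" and "admissible_weight k"
  shows "admissible_weight (\<lambda>t. max (h t) (k t))"
proof -
  have "mono_on {0<..} (\<lambda>t. max (h t) (k t))"
    using assms unfolding admissible_weight_def mono_on_def by (meson max.mono)
  moreover have "((\<lambda>t. max (h t) (k t)) \<longlongrightarrow> max 0 0) (at_right 0)"
    using assms unfolding admissible_weight_def by (intro tendsto_max) auto
  ultimately show ?thesis
    using assms unfolding admissible_weight_def by (auto intro: continuous_intros)
qed

lemma almost_analytic_ext_dbar_eq_0:
  assumes "admissible_weight h" and "\<rho> > 0" and "bounded U" and F: "almost_analytic_ext h \<rho> U f F"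
    and "w \<in> cvec ` closure U"
  shows "dbar F w = 0"
proof -
  obtain C where "\<And>z. infdist z (cvec ` closure U) > 0 \<Longrightarrow>
      norm (dbar F z) \<le> C * h (\<rho> * infdist z (cvec ` closure U))"
    using F unfolding almost_analytic_ext_def by blast
  moreover have "continuous_on UNIV (dbar F)"
    using F by (intro continuous_on_dbar) (simp add: almost_analytic_ext_def C1c_iff)
  moreover have "w islimpt - cvec ` closure U"
    using \<open>w \<in> cvec ` closure U\<close> cvec_islimpt_compl_range_cvec by (auto intro: islimpt_subset)
  moreover have "closed (cvec ` closure U)"
    using compact_cvec_image[OF \<open>bounded U\<close>] by (rule compact_imp_closed)
  moreover have "(h \<longlongrightarrow> 0) (at_right 0)"
    using \<open>admissible_weight h\<close> by (simp add: admissible_weight_def)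
  ultimately show ?thesis
    using \<open>\<rho> > 0\<close> \<open>w \<in> cvec ` closure U\<close>
    by (intro weighted_distance_bound_imp_eq_0[of h \<rho>]) (auto simp: continuous_on_eq_continuous_at)
qed

lemma almost_analytic_ext_dbar_le:
  assumes h: "admissible_weight h" and "\<rho> > 0" and "bounded U" "U \<noteq> {}"
    and F: "almost_analytic_ext h \<rho> U f F"
  obtains C where "C \<ge> 1"
    and "\<And>w t. t > 0 \<Longrightarrow> \<rho> * infdist w (cvec ` closure U) \<le> t \<Longrightarrow> norm (dbar F w) \<le> C * h t"
proof -
  let ?S = "cvec ` closure U"
  obtain C where "C \<ge> 1" and C: "\<And>z. infdist z ?S > 0 \<Longrightarrow> norm (dbar F z) \<le> C * h (\<rho> * infdist z ?S)"
    using F unfolding almost_analytic_ext_def by blast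
  have "norm (dbar F w) \<le> C * h t" if "t > 0" "\<rho> * infdist w ?S \<le> t" for w t
  proof (cases "infdist w ?S > 0")
    case True
    moreover have "mono_on {0<..} h"
      using h by (simp add: admissible_weight_def)
    ultimately have "h (\<rho> * infdist w ?S) \<le> h t"
      using that \<open>\<rho> > 0\<close> by (simp add: mono_onD)
    then show ?thesis
      using C[OF True] \<open>C \<ge> 1\<close> by (meson dual_order.trans mult_left_mono zero_le_one)
  next
    case False
    have "closed ?S"
      using compact_cvec_image[OF \<open>bounded U\<close>] by (rule compact_imp_closed)
    moreover have "?S \<noteq> {}"
      using \<open>U \<noteq> {}\<close> closure_subset by fastforce
    ultimately have "w \<in> ?S"
      using False in_closed_iff_infdist_zero infdist_nonneg by (metis less_eq_real_def)
    then have "dbar F w = 0"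
      by (rule almost_analytic_ext_dbar_eq_0[OF h \<open>\<rho> > 0\<close> \<open>bounded U\<close> F])
    moreover have "h t > 0"
      using h \<open>t > 0\<close> by (simp add: admissible_weight_def)
    ultimately show ?thesis
      using \<open>C \<ge> 1\<close> by simp
  qed
  with \<open>C \<ge> 1\<close> that show ?thesis
    by blast
qed

lemma almost_analytic_ext_vec_continuously_differentiable:
  "almost_analytic_ext_vec k \<sigma> V g G \<Longrightarrow> continuously_differentiable G"
  unfolding almost_analytic_ext_vec_def almost_analytic_ext_def C1c_iff
  by (blast intro: continuously_differentiable_componentwise)

lemma almost_analytic_ext_vec_cvec:
  "almost_analytic_ext_vec k \<sigma> V g G \<Longrightarrow> x \<in> V \<Longrightarrow> G (cvec x) = cvec (g x)"
  unfolding almost_analytic_ext_vec_def almost_analytic_ext_def by (simp add: vec_eq_iff)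

lemma almost_analytic_ext_vec_dbar_le:
  assumes k: "admissible_weight k" and "\<sigma> > 0" and G: "almost_analytic_ext_vec k \<sigma> V g G"
  obtains C where "C \<ge> 0" and "\<And>z t. infdist z (cvec ` closure V) > 0 \<Longrightarrow>
    \<sigma> * infdist z (cvec ` closure V) \<le> t \<Longrightarrow> (\<Sum>j\<in>UNIV. norm (dbar (\<lambda>z. G z $ j) z)) \<le> C * k t"
proof -
  let ?S = "cvec ` closure V"
  obtain C where "\<And>j. C j \<ge> 1"
    and C: "\<And>j z. infdist z ?S > 0 \<Longrightarrow> norm (dbar (\<lambda>z. G z $ j) z) \<le> C j * k (\<sigma> * infdist z ?S)"
    using G unfolding almost_analytic_ext_vec_def almost_analytic_ext_def by metis
  then have "(\<Sum>j\<in>UNIV. C j) \<ge> 0"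
    by (meson order_trans sum_nonneg zero_le_one)
  moreover have "(\<Sum>j\<in>UNIV. norm (dbar (\<lambda>z. G z $ j) z)) \<le> (\<Sum>j\<in>UNIV. C j) * k t"
    if "infdist z ?S > 0" and "\<sigma> * infdist z ?S \<le> t" for z t
  proof -
    have "mono_on {0<..} k"
      using k by (simp add: admissible_weight_def)
    moreover have "\<sigma> * infdist z ?S > 0"
      using that(1) \<open>\<sigma> > 0\<close> by simp
    ultimately have "k (\<sigma> * infdist z ?S) \<le> k t"
      using that(2) by (auto elim!: mono_onD)
    then have "C j * k (\<sigma> * infdist z ?S) \<le> C j * k t" for j
      using \<open>C j \<ge> 1\<close> by (simp add: mult_left_mono)
    then have "norm (dbar (\<lambda>z. G z $ j) z) \<le> C j * k t" for j
      by (rule order_trans[OF C[OF that(1)]])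
    then show ?thesis
      unfolding sum_distrib_right by (rule sum_mono)
  qed
  ultimately show ?thesis
    using that by blast
qed
lemma almost_analytic_ext_vec_image_closure_subset:
  assumes "almost_analytic_ext_vec k \<sigma> V g G" and "\<forall>x\<in>V. g x \<in> U" and "bounded U"
  shows "G ` cvec ` closure V \<subseteq> cvec ` closure U"
proof -
  have "continuous_on UNIV G"
    using assms(1) by (intro continuously_differentiable_imp_continuous_on
        almost_analytic_ext_vec_continuously_differentiable)
  then have "(G \<circ> cvec) ` closure V \<subseteq> cvec ` closure U"
    using assms almost_analytic_ext_vec_cvec[OF assms(1)] closure_subset compact_cvec_image[of U]
    by (intro image_closure_subset continuous_on_compose continuous_on_cvec compact_imp_closed)
      (auto intro: continuous_on_subset closure_subset[THEN subsetD])
  then show ?thesis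
    by (simp add: image_comp)
qed

lemma almost_analytic_ext_vec_infdist_le:
  assumes "almost_analytic_ext_vec k \<sigma> V g G" and "\<forall>x\<in>V. g x \<in> U" and "bounded U"
    and "L-lipschitz_on UNIV G" and "V \<noteq> {}"
  shows "infdist (G z) (cvec ` closure U) \<le> L * infdist z (cvec ` closure V)"
  using assms almost_analytic_ext_vec_image_closure_subset[OF assms(1-3)]
  by (intro infdist_image_le_lipschitz) auto

lemma almost_analytic_ext_dbar_at_image_le:
  assumes h: "admissible_weight h" and "\<rho> > 0" and "bounded U"
    and F: "almost_analytic_ext h \<rho> U f F" and gU: "\<forall>x\<in>V. g x \<in> U"
    and G: "almost_analytic_ext_vec k \<sigma> V g G" and lip: "L-lipschitz_on UNIV G" and "V \<noteq> {}"
  obtains C where "C \<ge> 1" and "\<And>z t. t > 0 \<Longrightarrow> L * \<rho> * infdist z (cvec ` closure V) \<le> t \<Longrightarrow>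
    norm (dbar F (G z)) \<le> C * h t"
proof -
  have "U \<noteq> {}"
    using gU \<open>V \<noteq> {}\<close> by blast
  obtain C where "C \<ge> 1"
    and C: "\<And>w t. t > 0 \<Longrightarrow> \<rho> * infdist w (cvec ` closure U) \<le> t \<Longrightarrow> norm (dbar F w) \<le> C * h t"
    using almost_analytic_ext_dbar_le[OF h \<open>\<rho> > 0\<close> \<open>bounded U\<close> \<open>U \<noteq> {}\<close> F] by blast
  have "\<rho> * infdist (G z) (cvec ` closure U) \<le> L * \<rho> * infdist z (cvec ` closure V)" for z
    using almost_analytic_ext_vec_infdist_le[OF G gU \<open>bounded U\<close> lip \<open>V \<noteq> {}\<close>, of z] \<open>\<rho> > 0\<close>
    by (simp add: mult.assoc mult.left_commute)
  with C \<open>C \<ge> 1\<close> that show ?thesis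
    by (meson order_trans)
qed

lemma almost_analytic_ext_compose_dbar_le:
  fixes F :: "complex ^ 'n \<Rightarrow> complex" and G :: "complex ^ 'm \<Rightarrow> complex ^ 'n"
  assumes h: "admissible_weight h" and k: "admissible_weight k" and "\<rho> > 0" and "\<sigma> > 0"
    and "bounded U" and "bounded V"
    and F: "almost_analytic_ext h \<rho> U f F" and gU: "\<forall>x\<in>V. g x \<in> U"
    and G: "almost_analytic_ext_vec k \<sigma> V g G" and lip: "L-lipschitz_on UNIV G"
  obtains C where "\<And>z. infdist z (cvec ` closure V) > 0 \<Longrightarrow> norm (dbar (F \<circ> G) z) \<le>
    C * max (h (max (L * \<rho>) \<sigma> * infdist z (cvec ` closure V))) (k (max (L * \<rho>) \<sigma> * infdist z (cvec ` closure V)))"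
proof (cases "V = {}")
  case True
  then show ?thesis
    using that by (simp add: infdist_def)
next
  case False
  define \<rho>' where "\<rho>' = max (L * \<rho>) \<sigma>"
  let ?S = "cvec ` closure V"
  obtain DF MB where DF: "\<And>w. (F has_derivative blinfun_apply (DF w)) (at w)" and MB: "\<And>w. norm (DF w) \<le> MB"
    using F C1c_bounded_derivative unfolding almost_analytic_ext_def by blast
  obtain CF where "CF \<ge> 1" and CF: "\<And>z t. t > 0 \<Longrightarrow> L * \<rho> * infdist z ?S \<le> t \<Longrightarrow>
      norm (dbar F (G z)) \<le> CF * h t"
    using almost_analytic_ext_dbar_at_image_le[OF h \<open>\<rho> > 0\<close> \<open>bounded U\<close> F gU G lip False] by blast
  obtain CG where "CG \<ge> 0" and CG: "\<And>z t. infdist z ?S > 0 \<Longrightarrow> \<sigma> * infdist z ?S \<le> t \<Longrightarrow>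
      (\<Sum>j\<in>UNIV. norm (dbar (\<lambda>z. G z $ j) z)) \<le> CG * k t"
    using almost_analytic_ext_vec_dbar_le[OF k \<open>\<sigma> > 0\<close> G] by blast
  obtain G' where G': "\<And>z. (G has_derivative blinfun_apply (G' z)) (at z)"
    using almost_analytic_ext_vec_continuously_differentiable[OF G]
    unfolding continuously_differentiable_def by blast
  have "L \<ge> 0" and "MB \<ge> 0"
    using lipschitz_on_nonneg[OF lip] order_trans[OF norm_ge_zero MB] by auto
  have "norm (dbar (F \<circ> G) z) \<le> (CARD('m) * (L * CF + MB * CG)) * max (h (\<rho>' * infdist z ?S)) (k (\<rho>' * infdist z ?S))"
    if "infdist z ?S > 0" for z
  proof -
    let ?t = "\<rho>' * infdist z ?S"
    have "?t > 0" and "L * \<rho> * infdist z ?S \<le> ?t" and "\<sigma> * infdist z ?S \<le> ?t"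
      using that \<open>\<sigma> > 0\<close> by (simp_all add: \<rho>'_def mult_right_mono)
    have "norm (dbar (F \<circ> G) z) \<le>
        CARD('m) * (L * norm (dbar F (G z)) + norm (DF (G z)) * (\<Sum>j\<in>UNIV. norm (dbar (\<lambda>z. G z $ j) z)))"
      using G'(1) DF has_derivative_norm_le_lipschitz[OF G'(1) lip] by (rule norm_dbar_compose_le)
    also have "\<dots> \<le> CARD('m) * (L * (CF * h ?t) + MB * (CG * k ?t))"
      using CF[OF \<open>?t > 0\<close> \<open>L * \<rho> * infdist z ?S \<le> ?t\<close>] CG[OF that \<open>\<sigma> * infdist z ?S \<le> ?t\<close>]
        MB[of "G z"] \<open>L \<ge> 0\<close> \<open>MB \<ge> 0\<close>
      by (intro mult_left_mono add_mono mult_mono) (auto intro: sum_nonneg)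
    also have "\<dots> \<le> (CARD('m) * (L * CF + MB * CG)) * max (h ?t) (k ?t)"
      using \<open>L \<ge> 0\<close> \<open>MB \<ge> 0\<close> \<open>CF \<ge> 1\<close> \<open>CG \<ge> 0\<close>
      by (simp add: algebra_simps add_mono mult_left_mono)
    finally show ?thesis .
  qed
  then show ?thesis
    using that unfolding \<rho>'_def by blast
qed

lemma has_almost_analytic_ext_if_dbar_le:
  fixes E :: "complex ^ 'm \<Rightarrow> complex"
  assumes K: "admissible_weight K" and "\<rho> > 0" and "bounded V"
    and E: "continuously_differentiable E" and E_ext: "\<And>x. x \<in> V \<Longrightarrow> E (cvec x) = complex_of_real (f x)"
    and bound: "\<And>z. infdist z (cvec ` closure V) > 0 \<Longrightarrow>
      norm (dbar E z) \<le> C * K (\<rho> * infdist z (cvec ` closure V))"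
  shows "has_almost_analytic_ext K \<rho> V f"
proof -
  let ?S = "cvec ` closure V"
  obtain r where r: "\<And>y. y \<in> ?S \<Longrightarrow> norm y \<le> r"
    using compact_imp_bounded[OF compact_cvec_image[OF \<open>bounded V\<close>]] by (meson bounded_pos)
  have near_S: "z \<in> ball 0 (r + 1)" if "infdist z ?S < 1" "?S \<noteq> {}" for z
  proof -
    obtain y where "y \<in> ?S" "infdist z ?S = dist z y"
      using infdist_attains_inf \<open>?S \<noteq> {}\<close> compact_imp_closed[OF compact_cvec_image[OF \<open>bounded V\<close>]]
      by blast
    then show ?thesis
      using r[of y] that(1) norm_triangle_ineq2[of z y] by (simp add: dist_norm)
  qed
  obtain H where "C1c H" and H_eq: "\<And>z. z \<in> ball 0 (r + 1) \<Longrightarrow> H z = E z"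
    and dbar_H: "\<And>z. z \<in> ball 0 (r + 1) \<Longrightarrow> dbar H z = dbar E z"
    using C1c_cutoff_eq_on_ball[OF E] by blast
  have "H (cvec x) = complex_of_real (f x)" if "x \<in> V" for x
  proof -
    have "cvec x \<in> ?S"
      using that closure_subset by auto
    then have "cvec x \<in> ball 0 (r + 1)"
      using near_S[of "cvec x"] by (metis empty_iff infdist_zero zero_less_one)
    then show ?thesis
      by (simp add: H_eq E_ext that)
  qed
  moreover obtain C' where "C' \<ge> 1"
    and "\<And>z. infdist z ?S > 0 \<Longrightarrow> norm (dbar H z) \<le> C' * K (\<rho> * infdist z ?S)"
  proof (rule weighted_bound_if_bounded_and_near_bound[of K])
    show "mono_on {0<..} K" "\<And>t. t > 0 \<Longrightarrow> K t > 0"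
      using K by (auto simp: admissible_weight_def)
    show "norm (dbar H z) \<le> C * K (\<rho> * infdist z ?S)" if "0 < infdist z ?S" "infdist z ?S < 1" for z
      using that near_S[of z] bound[of z] by (auto simp: dbar_H infdist_def split: if_splits)
  qed (use \<open>\<rho> > 0\<close> C1c_bounded_dbar[OF \<open>C1c H\<close>] in auto)
  ultimately show ?thesis
    using \<open>C1c H\<close> unfolding has_almost_analytic_ext_def almost_analytic_ext_def by blast
qed

theorem proposition1p1:
  fixes h k :: "real \<Rightarrow> real" and \<rho> \<sigma> L :: real
    and U :: "(real ^ 'n) set" and V :: "(real ^ 'm) set"
    and f :: "real ^ 'n \<Rightarrow> real" and g :: "real ^ 'm \<Rightarrow> real ^ 'n"
    and G :: "complex ^ 'm \<Rightarrow> complex ^ 'n"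
  assumes "admissible_weight h" and "admissible_weight k"
    and "\<rho> > 0" and "\<sigma> > 0"
    and "bounded U" and "open U" and "bounded V" and "open V"
    and "has_almost_analytic_ext h \<rho> U f"
    and "\<forall>x\<in>V. g x \<in> U"
    and "almost_analytic_ext_vec k \<sigma> V g G"
    and "L-lipschitz_on UNIV G"
  shows "has_almost_analytic_ext (\<lambda>t. max (h t) (k t)) (max (L * \<rho>) \<sigma>) V (f \<circ> g)"
proof -
  obtain F where F: "almost_analytic_ext h \<rho> U f F"
    using assms(9) by (auto simp: has_almost_analytic_ext_def)
  obtain C where bound: "\<And>z. infdist z (cvec ` closure V) > 0 \<Longrightarrow> norm (dbar (F \<circ> G) z) \<le>
      C * max (h (max (L * \<rho>) \<sigma> * infdist z (cvec ` closure V))) (k (max (L * \<rho>) \<sigma> * infdist z (cvec ` closure V)))"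
    using almost_analytic_ext_compose_dbar_le[OF assms(1-4,5,7) F assms(10-12)] by blast
  have "continuously_differentiable (F \<circ> G)"
    using F almost_analytic_ext_vec_continuously_differentiable[OF assms(11)]
    by (intro continuously_differentiable_compose) (auto simp: almost_analytic_ext_def C1c_iff)
  moreover have "(F \<circ> G) (cvec x) = complex_of_real ((f \<circ> g) x)" if "x \<in> V" for x
    using F that assms(10) almost_analytic_ext_vec_cvec[OF assms(11)] by (simp add: almost_analytic_ext_def)
  ultimately show ?thesis
    using admissible_weight_max[OF assms(1,2)] assms(4,7) bound
    by (intro has_almost_analytic_ext_if_dbar_le[where E="F \<circ> G"]) auto
qed

end
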